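(* Let $\lambda>0$, $p\in\mathbb{N}$, and let $f\in C^p\left[0,\frac12\lambda^{-1/2}\right]$ be real-valued. Write $\max$ for the maximum over $\left[0,\frac12\lambda^{-1/2}\right]$. Then at least one of the following inequalities holds: $$\max|f'|\le4^{p+\frac12}\lambda^{\frac12}\max|f|,\qquad\text{or}\qquad \max|f'|\le\left(\frac{\max|f^{(p)}|}{\max|f|}\right)^{\frac1p}4^{p-\frac12}\max|f|.$$ *)

theory Defs
  imports "HOL-Analysis.Analysis"
begin

text \<open>D 0, D 1, ..., D p are f and its successive derivatives on S (one-sided at
  endpoints, i.e. derivatives within S), all continuous on S: f is of class C^p on S.\<close>
definition Cp_on :: "nat \<Rightarrow> real set \<Rightarrow> (nat \<Rightarrow> real \<Rightarrow> real) \<Rightarrow> bool" where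
  "Cp_on p S D \<longleftrightarrow>
     (\<forall>k<p. \<forall>x\<in>S. (D k has_real_derivative D (Suc k) x) (at x within S)) \<and>
     (\<forall>k\<le>p. continuous_on S (D k))"

definition max_abs_on :: "real set \<Rightarrow> (real \<Rightarrow> real) \<Rightarrow> real" where
  "max_abs_on S g = Sup ((\<lambda>x. \<bar>g x\<bar>) ` S)"

end

theory Submission
  imports Defs
begin

text \<open>On an interval of length \<open>h\<close>, Taylor expansion from a point to both endpoints bounds
  \<open>|f'|\<close> by \<open>2 max|f| / h + h/2 max|f''|\<close>. The estimate for \<open>p\<close> applied to \<open>f'\<close> bounds
  \<open>max|f''|\<close>; inserting this into the case \<open>p = 2\<close> on shorter subintervals yields, by induction,
  \<open>max|f'| \<le> A max|f| / h + B h\<^sup>p\<^sup>-\<^sup>1 max|f\<^sup>(\<^sup>p\<^sup>)|\<close> for every \<open>h\<close> up to the length of the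
  interval, with \<open>A + 2 \<le> 4\<^sup>p\<close> and \<open>B 2\<^sup>p \<le> 2\<close>. Taking \<open>h\<close> to be the whole interval, or
  \<open>h = 2 (max|f| / max|f\<^sup>(\<^sup>p\<^sup>)|)\<^sup>1\<^sup>/\<^sup>p\<close> if that is shorter, gives the two alternatives.\<close>

lemma le_of_has_real_derivative_nonneg_within:
  fixes g g' :: "real \<Rightarrow> real"
  assumes "u \<le> v"
    and "\<And>s. s \<in> {u..v} \<Longrightarrow> (g has_real_derivative g' s) (at s within {u..v})"
    and "\<And>s. s \<in> {u..v} \<Longrightarrow> 0 \<le> g' s"
  shows "g u \<le> g v"
proof -
  obtain s where s: "s \<in> {u..v}" "g v - g u = g' s * (v - u)"
    using mvt_very_simple[OF assms(1), of g "\<lambda>s h. g' s * h"] assms(2)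
    by (auto simp: has_field_derivative_def)
  have "0 \<le> g' s * (v - u)" using s(1) assms(1,3) by simp
  then show ?thesis using s(2) by linarith
qed

lemma abs_diff_le_of_deriv_bound:
  fixes g g' \<phi> \<phi>' :: "real \<Rightarrow> real"
  assumes "u \<le> v"
    and g: "\<And>s. s \<in> {u..v} \<Longrightarrow> (g has_real_derivative g' s) (at s within {u..v})"
    and \<phi>: "\<And>s. s \<in> {u..v} \<Longrightarrow> (\<phi> has_real_derivative \<phi>' s) (at s within {u..v})"
    and bound: "\<And>s. s \<in> {u..v} \<Longrightarrow> \<bar>g' s\<bar> \<le> \<phi>' s"
  shows "\<bar>g v - g u\<bar> \<le> \<phi> v - \<phi> u"
proof -
  have sign: "0 \<le> \<phi>' s - g' s" "0 \<le> \<phi>' s + g' s" if "s \<in> {u..v}" for s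
    using bound[OF that] unfolding abs_le_iff by linarith+
  have "((\<lambda>s. \<phi> s - g s) has_real_derivative \<phi>' s - g' s) (at s within {u..v})"
    and "((\<lambda>s. \<phi> s + g s) has_real_derivative \<phi>' s + g' s) (at s within {u..v})"
    if "s \<in> {u..v}" for s
    using g[OF that] \<phi>[OF that] by (auto intro: derivative_intros)
  from this[THEN le_of_has_real_derivative_nonneg_within[OF assms(1)]] sign
  show ?thesis by (auto simp: abs_le_iff)
qed

lemma taylor_linear_remainder_bound:
  fixes f f' f'' :: "real \<Rightarrow> real"
  assumes uv: "u \<le> v"
    and f: "\<And>s. s \<in> {u..v} \<Longrightarrow> (f has_real_derivative f' s) (at s within {u..v})"
    and f': "\<And>s. s \<in> {u..v} \<Longrightarrow> (f' has_real_derivative f'' s) (at s within {u..v})"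
    and K: "\<And>s. s \<in> {u..v} \<Longrightarrow> \<bar>f'' s\<bar> \<le> K"
  shows "\<bar>f v - f u - f' u * (v - u)\<bar> \<le> K / 2 * (v - u)\<^sup>2"
    and "\<bar>f u - f v - f' v * (u - v)\<bar> \<le> K / 2 * (v - u)\<^sup>2"
proof -
  have f'_sub: "(f' has_real_derivative f'' s) (at s within {a..b})"
    if "s \<in> {a..b}" "u \<le> a" "b \<le> v" for s a b
    by (rule has_field_derivative_subset[OF f']) (use that in auto)
  have lipschitz: "\<bar>f' b - f' a\<bar> \<le> K * (b - a)" if "u \<le> a" "a \<le> b" "b \<le> v" for a b
  proof -
    have "\<bar>f' b - f' a\<bar> \<le> K * b - K * a"
      by (rule abs_diff_le_of_deriv_bound[OF \<open>a \<le> b\<close>, of _ f'' "\<lambda>s. K * s" "\<lambda>_. K"])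
        (use that in \<open>auto intro!: f'_sub K derivative_eq_intros\<close>)
    then show ?thesis by (simp add: algebra_simps)
  qed
  have "\<bar>(\<lambda>s. f s - f' u * s) v - (\<lambda>s. f s - f' u * s) u\<bar>
        \<le> (\<lambda>s. K / 2 * (s - u)\<^sup>2) v - (\<lambda>s. K / 2 * (s - u)\<^sup>2) u"
  proof (rule abs_diff_le_of_deriv_bound[OF uv])
    fix s assume s: "s \<in> {u..v}"
    show "((\<lambda>s. f s - f' u * s) has_real_derivative f' s - f' u) (at s within {u..v})"
      by (auto intro!: derivative_eq_intros f s)
    show "((\<lambda>s. K / 2 * (s - u)\<^sup>2) has_real_derivative K * (s - u)) (at s within {u..v})"
      by (auto intro!: derivative_eq_intros simp: field_simps)
    show "\<bar>f' s - f' u\<bar> \<le> K * (s - u)" using lipschitz s by auto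
  qed
  then show "\<bar>f v - f u - f' u * (v - u)\<bar> \<le> K / 2 * (v - u)\<^sup>2"
    by (simp add: algebra_simps)
  have "\<bar>(\<lambda>s. f s - f' v * s) v - (\<lambda>s. f s - f' v * s) u\<bar>
        \<le> (\<lambda>s. - K / 2 * (v - s)\<^sup>2) v - (\<lambda>s. - K / 2 * (v - s)\<^sup>2) u"
  proof (rule abs_diff_le_of_deriv_bound[OF uv])
    fix s assume s: "s \<in> {u..v}"
    show "((\<lambda>s. f s - f' v * s) has_real_derivative f' s - f' v) (at s within {u..v})"
      by (auto intro!: derivative_eq_intros f s)
    show "((\<lambda>s. - K / 2 * (v - s)\<^sup>2) has_real_derivative K * (v - s)) (at s within {u..v})"
      by (auto intro!: derivative_eq_intros simp: field_simps)
    show "\<bar>f' s - f' v\<bar> \<le> K * (v - s)" using lipschitz[of s v] s by (auto simp: abs_minus_commute)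
  qed
  then show "\<bar>f u - f v - f' v * (u - v)\<bar> \<le> K / 2 * (v - u)\<^sup>2"
    by (simp add: algebra_simps abs_minus_commute)
qed

lemma abs_le_max_abs_on:
  assumes "continuous_on S g" "compact S" "x \<in> S"
  shows "\<bar>g x\<bar> \<le> max_abs_on S g"
proof -
  have "bdd_above ((\<lambda>x. \<bar>g x\<bar>) ` S)"
    by (intro bounded_imp_bdd_above compact_imp_bounded compact_continuous_image
        continuous_intros assms)
  then show ?thesis unfolding max_abs_on_def by (rule cSUP_upper[OF assms(3)])
qed

lemma max_abs_on_le:
  assumes "S \<noteq> {}" "\<And>x. x \<in> S \<Longrightarrow> \<bar>g x\<bar> \<le> c"
  shows "max_abs_on S g \<le> c"
  unfolding max_abs_on_def by (rule cSup_least) (use assms in auto)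

lemma Cp_on_mono: "Cp_on p S D \<Longrightarrow> q \<le> p \<Longrightarrow> Cp_on q S D"
  unfolding Cp_on_def by auto

lemma Cp_on_subset: "Cp_on p S D \<Longrightarrow> T \<subseteq> S \<Longrightarrow> Cp_on p T D"
  unfolding Cp_on_def by (auto intro: has_field_derivative_subset continuous_on_subset)

lemma Cp_on_Suc_shift: "Cp_on (Suc p) S D \<Longrightarrow> Cp_on p S (\<lambda>k. D (Suc k))"
  unfolding Cp_on_def by auto

definition landau_kolmogorov :: "nat \<Rightarrow> real \<Rightarrow> real \<Rightarrow> bool" where
  "landau_kolmogorov p A B \<longleftrightarrow>
     (\<forall>a b D K0 Kp. a < b \<longrightarrow> Cp_on p {a..b} D \<longrightarrow>
        (\<forall>y\<in>{a..b}. \<bar>D 0 y\<bar> \<le> K0 \<and> \<bar>D p y\<bar> \<le> Kp) \<longrightarrow>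
        (\<forall>x\<in>{a..b}. \<bar>D 1 x\<bar> \<le> A * K0 / (b - a) + B * (b - a) ^ (p - 1) * Kp))"

lemma landau_kolmogorov_subinterval:
  assumes "landau_kolmogorov p A B" "Cp_on p {a..b} D" "x \<in> {a..b}" "0 < h" "h \<le> b - a"
    and "\<And>y. y \<in> {a..b} \<Longrightarrow> \<bar>D 0 y\<bar> \<le> K0" "\<And>y. y \<in> {a..b} \<Longrightarrow> \<bar>D p y\<bar> \<le> Kp"
  shows "\<bar>D 1 x\<bar> \<le> A * K0 / h + B * h ^ (p - 1) * Kp"
proof -
  define c where "c = min x (b - h)"
  have sub: "{c..c + h} \<subseteq> {a..b}" and x: "x \<in> {c..c + h}"
    using assms(3-5) unfolding c_def by auto
  have "\<bar>D 1 x\<bar> \<le> A * K0 / (c + h - c) + B * (c + h - c) ^ (p - 1) * Kp"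
    using assms(1)[unfolded landau_kolmogorov_def, rule_format, of c "c + h" D K0 Kp x]
      Cp_on_subset[OF assms(2) sub] x sub assms(4,6,7) by auto
  then show ?thesis by simp
qed

lemma landau_kolmogorov_1: "landau_kolmogorov 1 0 1"
  unfolding landau_kolmogorov_def by auto

lemma landau_kolmogorov_2: "landau_kolmogorov 2 2 (1/2)"
  unfolding landau_kolmogorov_def
proof (intro allI impI ballI)
  fix a b :: real and D :: "nat \<Rightarrow> real \<Rightarrow> real" and K0 K2 x
  assume ab: "a < b" and C: "Cp_on 2 {a..b} D" and x: "x \<in> {a..b}"
    and K: "\<forall>y\<in>{a..b}. \<bar>D 0 y\<bar> \<le> K0 \<and> \<bar>D 2 y\<bar> \<le> K2"
  have d0: "(D 0 has_real_derivative D 1 s) (at s within {u..v})"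
    if "s \<in> {u..v}" "a \<le> u" "v \<le> b" for s u v
    by (rule has_field_derivative_subset[of _ _ _ "{a..b}"]) (use C that in \<open>auto simp: Cp_on_def\<close>)
  have d1: "(D 1 has_real_derivative D 2 s) (at s within {u..v})"
    if "s \<in> {u..v}" "a \<le> u" "v \<le> b" for s u v
    by (rule has_field_derivative_subset[of _ _ _ "{a..b}"])
      (use C that in \<open>auto simp: Cp_on_def numeral_2_eq_2\<close>)
  have right: "\<bar>D 0 b - D 0 x - D 1 x * (b - x)\<bar> \<le> K2 / 2 * (b - x)\<^sup>2"
    by (rule taylor_linear_remainder_bound(1)[where f''="D 2"])
      (use x K in \<open>auto intro!: d0[simplified] d1[simplified]\<close>)
  have left: "\<bar>D 0 a - D 0 x - D 1 x * (a - x)\<bar> \<le> K2 / 2 * (x - a)\<^sup>2"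
    by (rule taylor_linear_remainder_bound(2)[where f''="D 2"])
      (use x K in \<open>auto intro!: d0[simplified] d1[simplified]\<close>)
  have "0 \<le> K2 * ((b - x) * (x - a))"
    using K x by (intro mult_nonneg_nonneg) (auto intro: order_trans[OF abs_ge_zero])
  moreover have "K2 / 2 * (b - a)\<^sup>2 = K2 / 2 * (b - x)\<^sup>2 + K2 / 2 * (x - a)\<^sup>2 + K2 * ((b - x) * (x - a))"
    by (simp add: power2_eq_square algebra_simps)
  ultimately have squares: "K2 / 2 * (b - x)\<^sup>2 + K2 / 2 * (x - a)\<^sup>2 \<le> K2 / 2 * (b - a)\<^sup>2"
    by linarith
  have "\<bar>D 1 x\<bar> * (b - a) = \<bar>D 1 x * (b - a)\<bar>" using ab by (simp add: abs_mult)
  also have "\<dots> = \<bar>(D 0 b - D 0 a) - (D 0 b - D 0 x - D 1 x * (b - x))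
                   + (D 0 a - D 0 x - D 1 x * (a - x))\<bar>"
    by (rule arg_cong[where f=abs]) (simp add: algebra_simps)
  also have "\<dots> \<le> \<bar>D 0 b\<bar> + \<bar>D 0 a\<bar> + K2 / 2 * (b - x)\<^sup>2 + K2 / 2 * (x - a)\<^sup>2"
    using left right by (simp only: abs_le_iff) linarith
  also have "\<dots> \<le> 2 * K0 + K2 / 2 * (b - a)\<^sup>2"
  proof -
    have "\<bar>D 0 a\<bar> \<le> K0" "\<bar>D 0 b\<bar> \<le> K0" using K ab by auto
    with squares show ?thesis by linarith
  qed
  finally show "\<bar>D 1 x\<bar> \<le> 2 * K0 / (b - a) + 1 / 2 * (b - a) ^ (2 - 1) * K2"
    using ab by (simp add: field_simps power2_eq_square)
qed

text \<open>Bound \<open>f''\<close> on the whole interval through the hypothesis applied to \<open>f'\<close>, then apply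
  \<open>landau_kolmogorov\<close> for \<open>p = 2\<close> on subintervals of length \<open>h / A\<close>; the resulting
  estimate contains \<open>max|f'| / 2\<close> on the right and is solved for \<open>max|f'|\<close>.\<close>

lemma landau_kolmogorov_Suc:
  assumes IH: "landau_kolmogorov (Suc q) A B" and A: "1 \<le> A"
  shows "landau_kolmogorov (Suc (Suc q)) (4 * A) (B / A)"
  unfolding landau_kolmogorov_def
proof (intro allI impI ballI)
  fix a b :: real and D :: "nat \<Rightarrow> real \<Rightarrow> real" and K0 Kp x
  assume ab: "a < b" and C: "Cp_on (Suc (Suc q)) {a..b} D" and x: "x \<in> {a..b}"
    and K: "\<forall>y\<in>{a..b}. \<bar>D 0 y\<bar> \<le> K0 \<and> \<bar>D (Suc (Suc q)) y\<bar> \<le> Kp"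
  define h where "h = b - a"
  define M1 where "M1 = max_abs_on {a..b} (D 1)"
  have h: "0 < h" using ab by (simp add: h_def)
  have M1: "\<bar>D 1 y\<bar> \<le> M1" if "y \<in> {a..b}" for y
    unfolding M1_def using C that by (intro abs_le_max_abs_on) (auto simp: Cp_on_def)
  define K2 where "K2 = A * M1 / h + B * h ^ q * Kp"
  have K2: "\<bar>D 2 y\<bar> \<le> K2" if "y \<in> {a..b}" for y
    using landau_kolmogorov_subinterval[OF IH Cp_on_Suc_shift[OF C] that h, of M1 Kp] M1 K
    by (simp add: K2_def h_def numeral_2_eq_2)
  have "h / A \<le> h" using divide_left_mono[of 1 A h] h A by simp
  have "\<bar>D 1 y\<bar> \<le> 2 * A * K0 / h + M1 / 2 + B * h ^ Suc q * Kp / (2 * A)" if "y \<in> {a..b}" for y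
  proof -
    have "\<bar>D 1 y\<bar> \<le> 2 * K0 / (h / A) + 1 / 2 * (h / A) ^ (2 - 1) * K2"
      by (intro landau_kolmogorov_subinterval[OF landau_kolmogorov_2 Cp_on_mono[OF C] that])
        (use h A K K2 \<open>h / A \<le> h\<close> in \<open>auto simp: h_def\<close>)
    also have "\<dots> = 2 * A * K0 / h + M1 / 2 + B * h ^ Suc q * Kp / (2 * A)"
      using h A by (simp add: K2_def field_simps)
    finally show ?thesis .
  qed
  then have "M1 \<le> 2 * A * K0 / h + M1 / 2 + B * h ^ Suc q * Kp / (2 * A)"
    unfolding M1_def using ab by (intro max_abs_on_le) auto
  then have "M1 \<le> 4 * A * K0 / h + B / A * h ^ Suc q * Kp"
    by (simp add: field_simps)
  then show "\<bar>D 1 x\<bar> \<le> 4 * A * K0 / (b - a) + B / A * (b - a) ^ (Suc (Suc q) - 1) * Kp"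
    using M1[OF x] by (simp add: h_def)
qed

lemma landau_kolmogorov_exists:
  assumes "1 \<le> p"
  shows "\<exists>A B. A + 2 \<le> 4 ^ p \<and> 0 \<le> B \<and> B * 2 ^ p \<le> 2 \<and> landau_kolmogorov p A B"
proof (cases "p = 1")
  case True
  then show ?thesis using landau_kolmogorov_1 by (intro exI[of _ 0] exI[of _ 1]) simp
next
  case False
  have "\<exists>A B. 2 \<le> A \<and> A + 2 \<le> 4 ^ p \<and> 0 \<le> B \<and> B * 2 ^ p \<le> 2 \<and> landau_kolmogorov p A B"
    if "2 \<le> p" for p
    using that
  proof (induction p rule: nat_induct_at_least)
    case base
    show ?case using landau_kolmogorov_2 by (intro exI[of _ 2] exI[of _ "1/2"]) simp
  next
    case (Suc p)
    then obtain A B where AB: "2 \<le> A" "A + 2 \<le> 4 ^ p" "0 \<le> B" "B * 2 ^ p \<le> 2"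
      and LK: "landau_kolmogorov p A B"
      by blast
    obtain q where p: "p = Suc q" using Suc.hyps by (cases p) auto
    have "B / A * 2 ^ Suc p = 2 * (B * 2 ^ p) / A" by simp
    also have "\<dots> \<le> 2 * 2 / A" using AB by (intro divide_right_mono) auto
    also have "\<dots> \<le> 2" using AB by (simp add: field_simps)
    finally have "B / A * 2 ^ Suc p \<le> 2" .
    moreover have "4 * A + 2 \<le> 4 ^ Suc p" using AB by simp
    ultimately show ?case
      using AB landau_kolmogorov_Suc[OF LK[unfolded p]] p by (intro exI[of _ "4 * A"] exI[of _ "B / A"]) auto
  qed
  moreover have "2 \<le> p" using assms False by simp
  ultimately obtain A B where "2 \<le> A" "A + 2 \<le> 4 ^ p" "0 \<le> B" "B * 2 ^ p \<le> 2"
    and "landau_kolmogorov p A B"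
    by blast
  then show ?thesis by blast
qed

text \<open>The choice of scale: \<open>h = L\<close> if \<open>r L \<le> 2\<close>, and \<open>h = 2 / r\<close> otherwise, where
  \<open>r = (Mp / M0)\<^sup>1\<^sup>/\<^sup>p\<close> makes \<open>B h\<^sup>p\<^sup>-\<^sup>1 Mp \<le> 2 M0 / h\<close>.\<close>

lemma le_at_optimal_scale:
  fixes A B L M0 M1 Mp :: real
  assumes p: "1 \<le> p" and L: "0 < L" and M0: "0 < M0" and Mp: "0 \<le> Mp"
    and A: "A + 2 \<le> 4 ^ p" and B: "0 \<le> B" "B * 2 ^ p \<le> 2"
    and bound: "\<And>h. 0 < h \<Longrightarrow> h \<le> L \<Longrightarrow> M1 \<le> A * M0 / h + B * h ^ (p - 1) * Mp"
  shows "M1 \<le> 4 ^ p * M0 / L \<or> M1 \<le> (Mp / M0) powr (1 / real p) * (4 ^ p / 2) * M0"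
proof -
  define r where "r = (Mp / M0) powr (1 / real p)"
  have r: "0 \<le> r" unfolding r_def by simp
  have "r ^ p = Mp / M0"
    using p M0 Mp by (simp add: r_def powr_realpow'[symmetric] powr_powr)
  then have Mp_eq: "Mp = r ^ p * M0" using M0 by simp
  have scale: "B * h ^ (p - 1) * Mp \<le> 2 * M0 / h" if "0 < h" "h * r \<le> 2" for h
  proof -
    have "B * (h * r) ^ p \<le> B * 2 ^ p"
      using that r B by (intro mult_left_mono power_mono) auto
    have "B * h ^ (p - 1) * Mp * h = B * (h * r) ^ p * M0"
      using power_minus_mult[of p h] p by (simp add: Mp_eq power_mult_distrib mult_ac)
    also have "\<dots> \<le> 2 * M0"
      using \<open>B * (h * r) ^ p \<le> B * 2 ^ p\<close> B M0 by (simp add: mult_right_mono)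
    finally have "B * h ^ (p - 1) * Mp * h \<le> 2 * M0" .
    then show ?thesis using that by (simp add: le_divide_eq)
  qed
  show ?thesis
  proof (cases "L * r \<le> 2")
    case True
    have "M1 \<le> A * M0 / L + 2 * M0 / L"
      using bound[OF L order.refl] scale[OF L True] by (simp add: mult.commute)
    also have "\<dots> = (A + 2) * M0 / L" by (simp add: add_divide_distrib distrib_right)
    also have "\<dots> \<le> 4 ^ p * M0 / L" using A M0 L by (simp add: divide_right_mono)
    finally show ?thesis by simp
  next
    case False
    then have r0: "0 < r" using r L by (cases "r = 0") auto
    have h: "0 < 2 / r" "2 / r \<le> L" "2 / r * r \<le> 2"
      using False r0 by (auto simp: field_simps)
    have "M1 \<le> A * M0 / (2 / r) + 2 * M0 / (2 / r)"
      using bound[OF h(1,2)] scale[OF h(1,3)] by linarith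
    also have "\<dots> = (A + 2) / 2 * (r * M0)" by (simp add: field_simps)
    also have "\<dots> \<le> 4 ^ p / 2 * (r * M0)" using A r0 M0 by (intro mult_right_mono) auto
    finally show ?thesis by (simp add: r_def mult_ac)
  qed
qed

lemma has_real_derivative_Icc_vanishing_imp_zero:
  fixes f :: "real \<Rightarrow> real"
  assumes "a < b" "y \<in> {a..b}" "\<And>x. x \<in> {a..b} \<Longrightarrow> f x = 0"
    and "(f has_real_derivative f') (at y within {a..b})"
  shows "f' = 0"
proof -
  have "(f has_real_derivative 0) (at y within {a..b})"
    by (rule has_field_derivative_transform_within[where f="\<lambda>_. 0" and d=1]) (use assms in auto)
  then show ?thesis
    using vector_derivative_unique_within_closed_interval[of a b y f f' 0] assms
    by (simp add: has_real_derivative_iff_has_vector_derivative)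
qed

lemma max_abs_deriv_interpolation:
  fixes a b :: real and D :: "nat \<Rightarrow> real \<Rightarrow> real"
  assumes ab: "a < b" and p: "1 \<le> p" and C: "Cp_on p {a..b} D"
  defines "M k \<equiv> max_abs_on {a..b} (D k)"
  shows "M 1 \<le> 4 ^ p * M 0 / (b - a) \<or> M 1 \<le> (M p / M 0) powr (1 / real p) * (4 ^ p / 2) * M 0"
proof -
  have M: "\<bar>D k y\<bar> \<le> M k" if "k \<le> p" "y \<in> {a..b}" for k y
    unfolding M_def using C that by (intro abs_le_max_abs_on) (auto simp: Cp_on_def)
  have Mp: "0 \<le> M p" and M0: "0 \<le> M 0"
    using M[of _ a] ab p by (auto intro: order_trans[OF abs_ge_zero])
  show ?thesis
  proof (cases "M 0 = 0")
    case True
    have "D 1 y = 0" if "y \<in> {a..b}" for y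
      using has_real_derivative_Icc_vanishing_imp_zero[OF ab that, of "D 0"] M[of 0] True C p that
      by (auto simp: Cp_on_def)
    then have "M 1 \<le> 0" unfolding M_def using ab by (intro max_abs_on_le) auto
    then show ?thesis using True by simp
  next
    case False
    obtain A B where AB: "A + 2 \<le> 4 ^ p" "0 \<le> B" "B * 2 ^ p \<le> 2"
      and LK: "landau_kolmogorov p A B"
      using landau_kolmogorov_exists[OF p] by blast
    have "M 1 \<le> A * M 0 / h + B * h ^ (p - 1) * M p" if "0 < h" "h \<le> b - a" for h
      unfolding M_def[of 1]
    proof (rule max_abs_on_le)
      fix x assume "x \<in> {a..b}"
      then show "\<bar>D 1 x\<bar> \<le> A * M 0 / h + B * h ^ (p - 1) * M p"
        by (intro landau_kolmogorov_subinterval[OF LK C _ that] M) auto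
    qed (use ab in auto)
    then show ?thesis using le_at_optimal_scale[OF p _ _ Mp AB] ab M0 False by auto
  qed
qed

theorem proposition4p5:
  fixes lam :: real and p :: nat and D :: "nat \<Rightarrow> real \<Rightarrow> real"
  assumes "lam > 0" and "p \<ge> 1"
    and "Cp_on p {0 .. (1/2) * lam powr (-1/2)} D"
  shows "max_abs_on {0 .. (1/2) * lam powr (-1/2)} (D 1)
           \<le> 4 powr (real p + 1/2) * lam powr (1/2) * max_abs_on {0 .. (1/2) * lam powr (-1/2)} (D 0)
       \<or> max_abs_on {0 .. (1/2) * lam powr (-1/2)} (D 1)
           \<le> (max_abs_on {0 .. (1/2) * lam powr (-1/2)} (D p)
               / max_abs_on {0 .. (1/2) * lam powr (-1/2)} (D 0)) powr (1 / real p)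
             * 4 powr (real p - 1/2) * max_abs_on {0 .. (1/2) * lam powr (-1/2)} (D 0)"
proof -
  define L where "L = (1/2) * lam powr (-1/2)"
  have L: "0 < L" unfolding L_def using assms(1) by simp
  have sqrt4: "(4::real) powr (1/2) = 2" by (simp add: powr_half_sqrt)
  have "4 powr (real p + 1/2) = 4 ^ p * 2"
    by (simp add: powr_add powr_realpow sqrt4)
  then have first: "4 powr (real p + 1/2) * lam powr (1/2) = 4 ^ p / L"
    using assms(1) by (simp add: L_def powr_minus field_simps)
  have second: "4 powr (real p - 1/2) = 4 ^ p / 2"
    by (simp add: powr_diff powr_realpow sqrt4)
  show ?thesis
    using max_abs_deriv_interpolation[OF L assms(2) assms(3)[folded L_def]]
    unfolding L_def[symmetric] first second by (simp add: mult_ac)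
qed

end
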